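(* If there exists a non-degenerate triangular dynamical $r$-matrix $r:\mathfrak h^*\to\wedge^2\mathfrak g$, then $\mathfrak g$ admits a reductive decomposition $\mathfrak g=\mathfrak h\oplus\mathfrak m$, i.e. a linear subspace $\mathfrak m$ complementary to $\mathfrak h$ with $[\mathfrak h,\mathfrak m]\subset\mathfrak m$.
   Context: Let $\mathfrak g$ be a finite-dimensional real Lie algebra and $\mathfrak h\subset\mathfrak g$ an abelian subalgebra with basis $h_1,\dots,h_l$; $(\lambda^i)$ are the induced coordinates on $\mathfrak h^*$. A triangular dynamical $r$-matrix is a smooth $r:\mathfrak h^*\to\wedge^2\mathfrak g$ with $[h,r(\lambda)]=0$ for $h\in\mathfrak h$ and $\sum_i h_i\wedge\frac{\partial r}{\partial\lambda^i}+\frac12[r,r]=0$ (Schouten-type bracket). It is non-degenerate if $\mathfrak h+r(\lambda)^\#\mathfrak h^\perp=\mathfrak g$ for all $\lambda$, where $\langle\rho^\#\xi,\eta\rangle=\rho(\xi,\eta)$ and $\mathfrak h^\perp\subset\mathfrak g^*$ is the annihilator of $\mathfrak h$. *)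

theory Defs
  imports "HOL-Analysis.Analysis"
begin

text \<open>A finite-dimensional real Lie algebra: the carrier is a type of class
euclidean_space (a finite-dimensional real vector space; its inner product is only
used to identify g with its dual g*), with a bilinear, alternating bracket satisfying Jacobi.\<close>

definition lie_algebra :: "('a::euclidean_space \<Rightarrow> 'a \<Rightarrow> 'a) \<Rightarrow> bool" where
  "lie_algebra br \<longleftrightarrow> bilinear br \<and> (\<forall>x. br x x = 0) \<and>
     (\<forall>x y z. br x (br y z) + br y (br z x) + br z (br x y) = 0)"

text \<open>g* is identified with g via the inner product: the covector xi acts by x |-> xi \<bullet> x.
 An element of wedge^2 g is an alternating bilinear form on g* (a function 'a => 'a => real),
 an element of wedge^3 g an alternating trilinear form on g*.\<close>

definition bivector :: "('a::euclidean_space \<Rightarrow> 'a \<Rightarrow> real) \<Rightarrow> bool" where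
  "bivector \<rho> \<longleftrightarrow> bilinear \<rho> \<and> (\<forall>\<xi> \<eta>. \<rho> \<xi> \<eta> = - \<rho> \<eta> \<xi>)"

text \<open>Sharp map: <rho# xi, eta> = rho(xi, eta).\<close>
definition sharp :: "('a::euclidean_space \<Rightarrow> 'a \<Rightarrow> real) \<Rightarrow> 'a \<Rightarrow> 'a" where
  "sharp \<rho> \<xi> = (\<Sum>b\<in>Basis. \<rho> \<xi> b *\<^sub>R b)"

text \<open>X wedge Y wedge Z, evaluated on covectors (determinant convention).\<close>
definition wedge3 :: "'a::euclidean_space \<Rightarrow> 'a \<Rightarrow> 'a \<Rightarrow> 'a \<Rightarrow> 'a \<Rightarrow> 'a \<Rightarrow> real" where
  "wedge3 X Y Z = (\<lambda>\<xi> \<eta> \<zeta>.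
      (\<xi> \<bullet> X) * ((\<eta> \<bullet> Y) * (\<zeta> \<bullet> Z) - (\<eta> \<bullet> Z) * (\<zeta> \<bullet> Y))
    - (\<eta> \<bullet> X) * ((\<xi> \<bullet> Y) * (\<zeta> \<bullet> Z) - (\<xi> \<bullet> Z) * (\<zeta> \<bullet> Y))
    + (\<zeta> \<bullet> X) * ((\<xi> \<bullet> Y) * (\<eta> \<bullet> Z) - (\<xi> \<bullet> Z) * (\<eta> \<bullet> Y)))"

definition vec_wedge_biv :: "'a::euclidean_space \<Rightarrow> ('a \<Rightarrow> 'a \<Rightarrow> real) \<Rightarrow> 'a \<Rightarrow> 'a \<Rightarrow> 'a \<Rightarrow> real" where
  "vec_wedge_biv X \<rho> = (\<lambda>\<xi> \<eta> \<zeta>.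
      (\<xi> \<bullet> X) * \<rho> \<eta> \<zeta> - (\<eta> \<bullet> X) * \<rho> \<xi> \<zeta> + (\<zeta> \<bullet> X) * \<rho> \<xi> \<eta>)"

text \<open>Schouten bracket of decomposable bivectors:
 [X wedge Y, Z wedge W] = [X,Z] Y W - [X,W] Y Z - [Y,Z] X W + [Y,W] X Z.\<close>
definition schouten_dec ::
  "('a::euclidean_space \<Rightarrow> 'a \<Rightarrow> 'a) \<Rightarrow> 'a \<Rightarrow> 'a \<Rightarrow> 'a \<Rightarrow> 'a \<Rightarrow> 'a \<Rightarrow> 'a \<Rightarrow> 'a \<Rightarrow> real" where
  "schouten_dec br X Y Z W = (\<lambda>\<xi> \<eta> \<zeta>.
       wedge3 (br X Z) Y W \<xi> \<eta> \<zeta> - wedge3 (br X W) Y Z \<xi> \<eta> \<zeta>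
     - wedge3 (br Y Z) X W \<xi> \<eta> \<zeta> + wedge3 (br Y W) X Z \<xi> \<eta> \<zeta>)"

text \<open>Schouten bracket [rho, rho] of a bivector, by bilinear extension using the
 expansion rho = 1/2 sum_{a,b} rho(a,b) a wedge b in the (orthonormal) basis.\<close>
definition schouten :: "('a::euclidean_space \<Rightarrow> 'a \<Rightarrow> 'a) \<Rightarrow> ('a \<Rightarrow> 'a \<Rightarrow> real) \<Rightarrow> 'a \<Rightarrow> 'a \<Rightarrow> 'a \<Rightarrow> real" where
  "schouten br \<rho> = (\<lambda>\<xi> \<eta> \<zeta>. (1/4) * (\<Sum>a\<in>Basis. \<Sum>b\<in>Basis. \<Sum>c\<in>Basis. \<Sum>d\<in>Basis.
       \<rho> a b * \<rho> c d * schouten_dec br a b c d \<xi> \<eta> \<zeta>))"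

text \<open>Adjoint action of x on a bivector: ad_x(X wedge Y) = [x,X] wedge Y + X wedge [x,Y];
 on forms (ad_x rho)(xi,eta) = rho(xi o ad_x, eta) + rho(xi, eta o ad_x).\<close>
definition coad :: "('a::euclidean_space \<Rightarrow> 'a \<Rightarrow> 'a) \<Rightarrow> 'a \<Rightarrow> 'a \<Rightarrow> 'a" where
  "coad br x \<xi> = (\<Sum>b\<in>Basis. (\<xi> \<bullet> br x b) *\<^sub>R b)"

definition ad_biv :: "('a::euclidean_space \<Rightarrow> 'a \<Rightarrow> 'a) \<Rightarrow> 'a \<Rightarrow> ('a \<Rightarrow> 'a \<Rightarrow> real) \<Rightarrow> 'a \<Rightarrow> 'a \<Rightarrow> real" where
  "ad_biv br x \<rho> = (\<lambda>\<xi> \<eta>. \<rho> (coad br x \<xi>) \<eta> + \<rho> \<xi> (coad br x \<eta>))"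

definition partial :: "'l::finite \<Rightarrow> (real^'l \<Rightarrow> real) \<Rightarrow> real^'l \<Rightarrow> real" where
  "partial i f x = deriv (\<lambda>t. f (x + t *\<^sub>R axis i 1)) 0"

fun C_k :: "nat \<Rightarrow> (real^'l::finite \<Rightarrow> real) \<Rightarrow> bool" where
  "C_k 0 f = continuous_on UNIV f"
| "C_k (Suc k) f = (continuous_on UNIV f \<and>
     (\<forall>i x. (\<lambda>t. f (x + t *\<^sub>R axis i 1)) field_differentiable (at 0)) \<and>
     (\<forall>i. C_k k (partial i f)))"

definition smooth_fun :: "(real^'l::finite \<Rightarrow> real) \<Rightarrow> bool" where
  "smooth_fun f \<longleftrightarrow> (\<forall>k. C_k k f)"

text \<open>h = span of the basis hb (indexed by the finite type 'l); lambda in h* is given by its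
 coordinates lambda^i = lambda(h_i), i.e. h* = real^'l. r(lambda) is a bivector on g.\<close>

definition triangular_dyn_r_matrix ::
  "('a::euclidean_space \<Rightarrow> 'a \<Rightarrow> 'a) \<Rightarrow> ('l::finite \<Rightarrow> 'a) \<Rightarrow> (real^'l \<Rightarrow> 'a \<Rightarrow> 'a \<Rightarrow> real) \<Rightarrow> bool" where
  "triangular_dyn_r_matrix br hb r \<longleftrightarrow>
     (\<forall>lam. bivector (r lam)) \<and>
     (\<forall>\<xi> \<eta>. smooth_fun (\<lambda>lam. r lam \<xi> \<eta>)) \<and>
     (\<forall>lam. \<forall>x\<in>span (range hb). ad_biv br x (r lam) = (\<lambda>\<xi> \<eta>. 0)) \<and>
     (\<forall>lam \<xi> \<eta> \<zeta>.
        (\<Sum>i\<in>UNIV. vec_wedge_biv (hb i) (\<lambda>\<xi>' \<eta>'. partial i (\<lambda>\<mu>. r \<mu> \<xi>' \<eta>') lam) \<xi> \<eta> \<zeta>)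
        + (1/2) * schouten br (r lam) \<xi> \<eta> \<zeta> = 0)"

text \<open>Non-degeneracy: h + r(lambda)# h^perp = g for all lambda, where h^perp (annihilator of h)
 is, under g* = g, the orthogonal complement of h.\<close>
definition nondegenerate_dyn ::
  "('l::finite \<Rightarrow> 'a::euclidean_space) \<Rightarrow> (real^'l \<Rightarrow> 'a \<Rightarrow> 'a \<Rightarrow> real) \<Rightarrow> bool" where
  "nondegenerate_dyn hb r \<longleftrightarrow>
     (\<forall>lam. {x + sharp (r lam) \<xi> | x \<xi>. x \<in> span (range hb) \<and> (\<forall>y\<in>span (range hb). \<xi> \<bullet> y = 0)}
           = UNIV)"

end

theory Submission
  imports Defs
begin

text \<open>Only one value \<open>\<rho> = r(\<lambda>)\<close> is needed, and of the defining properties of a triangular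
  dynamical r-matrix only its \<open>ad\<^sub>\<h>\<close>-invariance. Take \<open>\<m> = \<rho>\<^sup>#(\<h>\<^sup>\<bottom>)\<close>. Invariance of \<open>\<rho>\<close> says
  that \<open>\<rho>\<^sup>#\<close> intertwines the coadjoint and the adjoint action of \<open>\<h>\<close>, and the coadjoint action
  of the abelian \<open>\<h>\<close> preserves \<open>\<h>\<^sup>\<bottom>\<close>, so \<open>[\<h>,\<m>] \<subseteq> \<m>\<close>. Non-degeneracy gives \<open>\<h> + \<m> = \<g>\<close>.
  If \<open>\<rho>\<^sup>#\<xi> \<in> \<h>\<close> for some \<open>\<xi> \<in> \<h>\<^sup>\<bottom>\<close>, then \<open>\<rho>(\<zeta>,\<xi>) = 0\<close> for all \<open>\<zeta> \<in> \<h>\<^sup>\<bottom>\<close>; writing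
  \<open>\<xi> = a + \<rho>\<^sup>#\<zeta>\<close> with \<open>a \<in> \<h>\<close> yields \<open>\<parallel>\<xi>\<parallel>\<^sup>2 = \<rho>(\<zeta>,\<xi>) = 0\<close>, so the sum is direct.\<close>

lemma mem_orthogonal_comp_iff: "\<xi> \<in> S\<^sup>\<bottom> \<longleftrightarrow> (\<forall>y\<in>S. \<xi> \<bullet> y = 0)"
  by (auto simp: orthogonal_comp_def orthogonal_def inner_commute)

lemma bilinear_span_eq_0:
  assumes "bilinear f" and "\<And>x y. x \<in> B \<Longrightarrow> y \<in> C \<Longrightarrow> f x y = 0"
    and "x \<in> span B" and "y \<in> span C"
  shows "f x y = 0"
proof -
  have "bilinear (\<lambda>_ _. 0 :: 'c)"
    by (simp add: bilinear_def linear_zero)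
  then show ?thesis
    using bilinear_eq[OF assms(1) _ order.refl order.refl assms(3,4)] assms(2) by blast
qed

lemma sharp_inner:
  fixes \<rho> :: "'a::euclidean_space \<Rightarrow> 'a \<Rightarrow> real"
  assumes "bilinear \<rho>"
  shows "sharp \<rho> \<xi> \<bullet> \<eta> = \<rho> \<xi> \<eta>"
proof -
  have lin: "linear (\<rho> \<xi>)"
    using assms by (simp add: bilinear_def)
  have "\<rho> \<xi> \<eta> = \<rho> \<xi> (\<Sum>b\<in>Basis. (\<eta> \<bullet> b) *\<^sub>R b)"
    by (simp add: euclidean_representation)
  also have "\<dots> = (\<Sum>b\<in>Basis. \<rho> \<xi> b * (b \<bullet> \<eta>))"
    by (simp add: linear_sum[OF lin] linear_scale[OF lin] inner_commute mult.commute)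
  finally show ?thesis
    by (simp add: sharp_def inner_sum_left)
qed

lemma linear_sharp:
  fixes \<rho> :: "'a::euclidean_space \<Rightarrow> 'a \<Rightarrow> real"
  assumes "bilinear \<rho>"
  shows "linear (sharp \<rho>)"
proof (rule linearI)
  fix \<xi> \<zeta> :: 'a and c :: real
  show "sharp \<rho> (\<xi> + \<zeta>) = sharp \<rho> \<xi> + sharp \<rho> \<zeta>"
    using assms by (simp add: vector_eq_rdot[symmetric] sharp_inner inner_add_left bilinear_ladd)
  show "sharp \<rho> (c *\<^sub>R \<xi>) = c *\<^sub>R sharp \<rho> \<xi>"
    using assms by (simp add: vector_eq_rdot[symmetric] sharp_inner bilinear_lmul)
qed

lemma coad_inner:
  fixes br :: "'a::euclidean_space \<Rightarrow> 'a \<Rightarrow> 'a"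
  assumes "bilinear br"
  shows "coad br x \<eta> \<bullet> y = \<eta> \<bullet> br x y"
proof -
  have lin: "linear (br x)"
    using assms by (simp add: bilinear_def)
  have "br x y = br x (\<Sum>b\<in>Basis. (y \<bullet> b) *\<^sub>R b)"
    by (simp add: euclidean_representation)
  also have "\<dots> = (\<Sum>b\<in>Basis. (y \<bullet> b) *\<^sub>R br x b)"
    by (simp add: linear_sum[OF lin] linear_scale[OF lin])
  finally show ?thesis
    by (simp add: coad_def inner_sum_left inner_sum_right inner_commute mult.commute)
qed

lemma coad_orthogonal_comp:
  fixes br :: "'a::euclidean_space \<Rightarrow> 'a \<Rightarrow> 'a"
  assumes "bilinear br" and "\<forall>z\<in>S. br x z \<in> S" and "\<xi> \<in> S\<^sup>\<bottom>"
  shows "coad br x \<xi> \<in> S\<^sup>\<bottom>"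
  using assms by (simp add: mem_orthogonal_comp_iff coad_inner)

lemma bracket_sharp:
  fixes br :: "'a::euclidean_space \<Rightarrow> 'a \<Rightarrow> 'a"
  assumes "bilinear br" and "bilinear \<rho>" and "ad_biv br x \<rho> = (\<lambda>\<xi> \<eta>. 0)"
  shows "br x (sharp \<rho> \<xi>) = sharp \<rho> (- coad br x \<xi>)"
proof (rule vector_eq_rdot[THEN iffD1], rule allI)
  fix \<eta>
  have invariant: "\<rho> (coad br x \<xi>) \<eta> = - \<rho> \<xi> (coad br x \<eta>)"
    using fun_cong[OF fun_cong[OF assms(3)], of \<xi> \<eta>] by (simp add: ad_biv_def)
  have "br x (sharp \<rho> \<xi>) \<bullet> \<eta> = sharp \<rho> \<xi> \<bullet> coad br x \<eta>"
    using assms(1) by (metis coad_inner inner_commute)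
  also have "\<dots> = \<rho> (- coad br x \<xi>) \<eta>"
    using assms(2) by (simp add: sharp_inner invariant bilinear_lneg)
  also have "\<dots> = sharp \<rho> (- coad br x \<xi>) \<bullet> \<eta>"
    using assms(2) by (simp add: sharp_inner)
  finally show "br x (sharp \<rho> \<xi>) \<bullet> \<eta> = sharp \<rho> (- coad br x \<xi>) \<bullet> \<eta>" .
qed

lemma bracket_sharp_orthogonal_comp:
  fixes br :: "'a::euclidean_space \<Rightarrow> 'a \<Rightarrow> 'a"
  assumes "bilinear br" and "bilinear \<rho>" and "ad_biv br x \<rho> = (\<lambda>\<xi> \<eta>. 0)"
    and "\<forall>z\<in>S. br x z \<in> S" and "y \<in> sharp \<rho> ` (S\<^sup>\<bottom>)"
  shows "br x y \<in> sharp \<rho> ` (S\<^sup>\<bottom>)"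
proof -
  obtain \<xi> where "\<xi> \<in> S\<^sup>\<bottom>" and y: "y = sharp \<rho> \<xi>"
    using assms(5) by blast
  then have "- coad br x \<xi> \<in> S\<^sup>\<bottom>"
    using assms(1,4) coad_orthogonal_comp subspace_neg subspace_orthogonal_comp by blast
  then show ?thesis
    using bracket_sharp[OF assms(1-3)] y by blast
qed

lemma sharp_orthogonal_comp_inter:
  fixes \<rho> :: "'a::euclidean_space \<Rightarrow> 'a \<Rightarrow> real"
  assumes "bivector \<rho>" and "subspace S"
    and nondeg: "{x + y | x y. x \<in> S \<and> y \<in> sharp \<rho> ` (S\<^sup>\<bottom>)} = UNIV"
  shows "S \<inter> sharp \<rho> ` (S\<^sup>\<bottom>) = {0}"
proof -
  have bil: "bilinear \<rho>" and skew: "\<And>\<xi> \<eta>. \<rho> \<xi> \<eta> = - \<rho> \<eta> \<xi>"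
    using assms(1) unfolding bivector_def by blast+
  have "\<xi> = 0" if \<xi>: "\<xi> \<in> S\<^sup>\<bottom>" and in_S: "sharp \<rho> \<xi> \<in> S" for \<xi>
  proof -
    obtain a \<zeta> where a: "a \<in> S" and \<zeta>: "\<zeta> \<in> S\<^sup>\<bottom>" and decomp: "\<xi> = a + sharp \<rho> \<zeta>"
      using nondeg by blast
    have "\<rho> \<zeta> \<xi> = - (\<zeta> \<bullet> sharp \<rho> \<xi>)"
      using skew[of \<zeta> \<xi>] sharp_inner[OF bil, of \<xi> \<zeta>] by (simp add: inner_commute)
    also have "\<dots> = 0"
      using \<zeta> in_S by (simp add: mem_orthogonal_comp_iff)
    finally have "\<rho> \<zeta> \<xi> = 0" .
    moreover have "\<xi> \<bullet> \<xi> = \<xi> \<bullet> a + \<rho> \<zeta> \<xi>"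
      using sharp_inner[OF bil, of \<zeta> \<xi>] by (subst (2) decomp) (simp add: inner_add_right inner_commute)
    moreover have "\<xi> \<bullet> a = 0"
      using \<xi> a by (simp add: mem_orthogonal_comp_iff)
    ultimately show "\<xi> = 0"
      by simp
  qed
  then show ?thesis
    using assms(2) linear_0[OF linear_sharp[OF bil]] subspace_0 subspace_orthogonal_comp
    by fastforce
qed

theorem lemma4p5:
  fixes br :: "'a::euclidean_space \<Rightarrow> 'a \<Rightarrow> 'a"
    and hb :: "'l::finite \<Rightarrow> 'a"
    and r :: "real^'l \<Rightarrow> 'a \<Rightarrow> 'a \<Rightarrow> real"
  assumes "lie_algebra br"
    and "inj hb" and "independent (range hb)"
    and "\<forall>i j. br (hb i) (hb j) = 0"
    and "triangular_dyn_r_matrix br hb r"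
    and "nondegenerate_dyn hb r"
  shows "\<exists>M. subspace M \<and> span (range hb) \<inter> M = {0}
           \<and> {x + y | x y. x \<in> span (range hb) \<and> y \<in> M} = UNIV
           \<and> (\<forall>x\<in>span (range hb). \<forall>y\<in>M. br x y \<in> M)"
proof -
  define \<h> where "\<h> = span (range hb)"
  define \<rho> where "\<rho> = r 0"
  have br: "bilinear br"
    using assms(1) by (simp add: lie_algebra_def)
  have \<rho>: "bivector \<rho>" and invariant: "\<And>x. x \<in> \<h> \<Longrightarrow> ad_biv br x \<rho> = (\<lambda>\<xi> \<eta>. 0)"
    using assms(5) by (simp_all add: triangular_dyn_r_matrix_def \<rho>_def \<h>_def)
  have nondeg: "{x + y | x y. x \<in> \<h> \<and> y \<in> sharp \<rho> ` (\<h>\<^sup>\<bottom>)} = UNIV"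
    using assms(6) unfolding nondegenerate_dyn_def \<rho>_def \<h>_def
    by (simp add: mem_orthogonal_comp_iff[symmetric] image_iff) blast
  have \<rho>_bilinear: "bilinear \<rho>"
    using \<rho> by (simp add: bivector_def)
  have abelian: "br x z = 0" if "x \<in> \<h>" and "z \<in> \<h>" for x z
    using assms(4) by (intro bilinear_span_eq_0[OF br _ that[unfolded \<h>_def]]) auto
  show ?thesis
    unfolding \<h>_def[symmetric]
  proof (intro exI conjI ballI)
    show "subspace (sharp \<rho> ` (\<h>\<^sup>\<bottom>))"
      using \<rho>_bilinear linear_sharp linear_subspace_image subspace_orthogonal_comp by blast
    show "\<h> \<inter> sharp \<rho> ` (\<h>\<^sup>\<bottom>) = {0}"
      using sharp_orthogonal_comp_inter[OF \<rho> _ nondeg] by (simp add: \<h>_def)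
    fix x y
    assume "x \<in> \<h>" and "y \<in> sharp \<rho> ` (\<h>\<^sup>\<bottom>)"
    then show "br x y \<in> sharp \<rho> ` (\<h>\<^sup>\<bottom>)"
      using bracket_sharp_orthogonal_comp[OF br \<rho>_bilinear invariant] abelian
      by (simp add: \<h>_def span_zero)
  qed (use nondeg in simp)
qed

end
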